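(* Let $X$ be a Polish space and let $\delta_1,\delta_2,\delta_3$ be regular derivations on the closed subsets of $X$ such that $\delta_1(P)\subseteq\delta_2(P)\cup\delta_3(P)$ for every closed set $P$. Then for every countable ordinal $\alpha$ and every closed set $P$, $\delta_1^{\omega^\alpha}(P)\subseteq\delta_2^{\omega^\alpha}(P)\cup\delta_3^{\omega^\alpha}(P)$.
   Context: A derivation is a map $\delta$ from the closed subsets of $X$ to closed subsets with $\delta(P)\subseteq P$; iterates: $\delta^0(P)=P$, $\delta^{\alpha+1}(P)=\delta(\delta^\alpha(P))$, $\delta^\alpha(P)=\bigcap_{\alpha'<\alpha}\delta^{\alpha'}(P)$ for limit $\alpha$. A derivation is regular if (a) $P\subseteq Q$ implies $\delta(P)\subseteq\delta(Q)$, and (b) $\delta(P\cup Q)\subseteq\delta(P)\cup\delta(Q)$, for all closed $P,Q$. *)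

theory Defs
  imports "HOL-Analysis.Analysis"
begin

definition derivation :: "('x::topological_space set \<Rightarrow> 'x set) \<Rightarrow> bool" where
  "derivation \<delta> \<longleftrightarrow> (\<forall>P. closed P \<longrightarrow> closed (\<delta> P) \<and> \<delta> P \<subseteq> P)"

definition regular_derivation :: "('x::topological_space set \<Rightarrow> 'x set) \<Rightarrow> bool" where
  "regular_derivation \<delta> \<longleftrightarrow> derivation \<delta>
     \<and> (\<forall>P Q. closed P \<longrightarrow> closed Q \<longrightarrow> P \<subseteq> Q \<longrightarrow> \<delta> P \<subseteq> \<delta> Q)
     \<and> (\<forall>P Q. closed P \<longrightarrow> closed Q \<longrightarrow> \<delta> (P \<union> Q) \<subseteq> \<delta> P \<union> \<delta> Q)"

text \<open>Ordinals are represented by well-orders (Well_order r); the ordinal is the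
  order type of r.  Strict predecessors and maximal elements:\<close>

definition strict_below :: "'i rel \<Rightarrow> 'i \<Rightarrow> 'i set" where
  "strict_below r x = {y. (y, x) \<in> r \<and> y \<noteq> x}"

definition is_max :: "'i rel \<Rightarrow> 'i set \<Rightarrow> 'i \<Rightarrow> bool" where
  "is_max r S m \<longleftrightarrow> m \<in> S \<and> (\<forall>z\<in>S. (z, m) \<in> r)"

text \<open>deriv_iter_at d r P x is the iterate of d of length equal to the order type
  of the strict initial segment of r below x (transfinite recursion:
  0 gives P, successor gives d of the previous iterate, limit gives intersection).\<close>

definition deriv_iter_at :: "('x set \<Rightarrow> 'x set) \<Rightarrow> 'i rel \<Rightarrow> 'x set \<Rightarrow> 'i \<Rightarrow> 'x set" where
  "deriv_iter_at d r P = wfrec (r - Id) (\<lambda>F x.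
     if strict_below r x = {} then P
     else if (\<exists>y. is_max r (strict_below r x) y)
       then d (F (THE y. is_max r (strict_below r x) y))
     else \<Inter> (F ` strict_below r x))"

text \<open>deriv_iter d r P is the iterate of d of length the order type of r.\<close>

definition deriv_iter :: "('x set \<Rightarrow> 'x set) \<Rightarrow> 'i rel \<Rightarrow> 'x set \<Rightarrow> 'x set" where
  "deriv_iter d r P =
     (if Field r = {} then P
      else if (\<exists>m. is_max r (Field r) m)
        then d (deriv_iter_at d r P (THE m. is_max r (Field r) m))
      else \<Inter> (deriv_iter_at d r P ` Field r))"

text \<open>Ordinal exponentiation omega^alpha (alpha the order type of r): finitely supported
  functions from Field r to nat (Cantor normal form), compared at the r-largest
  position where they differ.\<close>

definition fin_supp :: "'i rel \<Rightarrow> ('i \<Rightarrow> nat) set" where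
  "fin_supp r = {f. finite {x. f x \<noteq> 0} \<and> (\<forall>x. f x \<noteq> 0 \<longrightarrow> x \<in> Field r)}"

definition omega_exp :: "'i rel \<Rightarrow> ('i \<Rightarrow> nat) rel" where
  "omega_exp r = {(f, g). f \<in> fin_supp r \<and> g \<in> fin_supp r \<and>
     (f = g \<or> (\<exists>x\<in>Field r. f x < g x \<and>
        (\<forall>y\<in>Field r. (x, y) \<in> r \<and> y \<noteq> x \<longrightarrow> f y = g y)))}"

end

theory Submission
  imports Defs "HOL-Library.Function_Algebras" "HOL-Library.Multiset"
begin

text \<open>Identify the ordinals below \<open>\<omega>\<^bsup>\<alpha>\<^esup>\<close> with their Cantor normal forms, i.e. finitely
  supported exponent functions. Every iterate \<open>\<delta>\<^bsup>\<xi>\<^esup>\<close> of a regular derivation is again regular,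
  and \<open>\<delta>\<^bsup>\<omega>\<^bsup>b\<^esup> \<cdot> n\<^esup>\<close> is the \<open>n\<close>-th power of \<open>\<delta>\<^bsup>\<omega>\<^bsup>b\<^esup>\<^esup>\<close>. For regular \<open>e\<^sub>1 \<subseteq> e\<^sub>2 \<union> e\<^sub>3\<close> one
  has \<open>e\<^sub>1\<^bsup>n+m-1\<^esup> \<subseteq> e\<^sub>2\<^bsup>n\<^esup> \<union> e\<^sub>3\<^bsup>m\<^esup>\<close>, hence \<open>e\<^sub>1\<^bsup>\<omega>\<^esup> \<subseteq> e\<^sub>2\<^bsup>\<omega>\<^esup> \<union> e\<^sub>3\<^bsup>\<omega>\<^esup>\<close>; and intersections of two
  decreasing chains distribute over unions. So the inclusion for \<open>\<omega>\<^bsup>a\<^esup>\<close> follows by induction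
  on \<open>a\<close>: at a successor \<open>a = b + 1\<close> apply the \<open>\<omega>\<close>-step to \<open>e\<^sub>i = \<delta>\<^sub>i\<^bsup>\<omega>\<^bsup>b\<^esup>\<^esup>\<close>, at a limit use the
  chain of the \<open>\<delta>\<^sub>i\<^bsup>\<omega>\<^bsup>b\<^esup>\<^esup>\<close>, \<open>b < a\<close>. The ordinal \<open>\<omega>\<^bsup>\<alpha>\<^esup>\<close> itself is handled like \<open>\<omega>\<^bsup>a\<^esup>\<close>, with all of \<open>\<alpha>\<close>
  in place of the ordinals below \<open>a\<close>.\<close>

section \<open>Finite powers of regular derivations\<close>

lemma regular_derivationD:
  assumes "regular_derivation d" and "closed P"
  shows regular_derivation_closed: "closed (d P)"
    and regular_derivation_subset: "d P \<subseteq> P"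
    and regular_derivation_mono: "closed Q \<Longrightarrow> P \<subseteq> Q \<Longrightarrow> d P \<subseteq> d Q"
    and regular_derivation_Un: "closed Q \<Longrightarrow> d (P \<union> Q) \<subseteq> d P \<union> d Q"
  using assms unfolding regular_derivation_def derivation_def by simp_all

lemma INT_Un_subset_of_chain:
  assumes "\<And>i j. i \<in> S \<Longrightarrow> j \<in> S \<Longrightarrow> (A i \<subseteq> A j \<and> B i \<subseteq> B j) \<or> (A j \<subseteq> A i \<and> B j \<subseteq> B i)"
  shows "(\<Inter>i\<in>S. A i \<union> B i) \<subseteq> (\<Inter>i\<in>S. A i) \<union> (\<Inter>i\<in>S. B i)"
proof
  fix x assume x: "x \<in> (\<Inter>i\<in>S. A i \<union> B i)"
  show "x \<in> (\<Inter>i\<in>S. A i) \<union> (\<Inter>i\<in>S. B i)"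
  proof (rule ccontr)
    assume "x \<notin> (\<Inter>i\<in>S. A i) \<union> (\<Inter>i\<in>S. B i)"
    then obtain i j where "i \<in> S" "j \<in> S" "x \<notin> A i" "x \<notin> B j" by blast
    with assms[of i j] x show False by blast
  qed
qed

lemma regular_derivation_id: "regular_derivation (\<lambda>P. P)"
  unfolding regular_derivation_def derivation_def by simp

lemma regular_derivation_comp:
  assumes "regular_derivation d" and "regular_derivation e"
  shows "regular_derivation (d \<circ> e)"
  unfolding regular_derivation_def[of "d \<circ> e"] derivation_def
proof (intro conjI allI impI)
  fix P Q :: "'a set" assume P: "closed P"
  note closed_e = regular_derivation_closed[OF assms(2)]
  show "closed ((d \<circ> e) P)"
    by (simp add: P assms(1) closed_e regular_derivation_closed)
  show "(d \<circ> e) P \<subseteq> P"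
    using regular_derivation_subset[OF assms(1) closed_e[OF P]]
      regular_derivation_subset[OF assms(2) P] by simp
  assume Q: "closed Q"
  show "P \<subseteq> Q \<Longrightarrow> (d \<circ> e) P \<subseteq> (d \<circ> e) Q"
    using regular_derivation_mono[OF assms(1) closed_e[OF P] closed_e[OF Q]]
      regular_derivation_mono[OF assms(2) P Q] by simp
  have "d (e (P \<union> Q)) \<subseteq> d (e P \<union> e Q)"
    using regular_derivation_mono[OF assms(1) closed_e[OF closed_Un[OF P Q]]]
      regular_derivation_Un[OF assms(2) P Q] closed_e[OF P] closed_e[OF Q] by blast
  also have "\<dots> \<subseteq> d (e P) \<union> d (e Q)"
    using regular_derivation_Un[OF assms(1) closed_e[OF P] closed_e[OF Q]] .
  finally show "(d \<circ> e) (P \<union> Q) \<subseteq> (d \<circ> e) P \<union> (d \<circ> e) Q"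
    by simp
qed

lemma regular_derivation_funpow: "regular_derivation d \<Longrightarrow> regular_derivation (d ^^ n)"
  by (induction n) (simp_all add: id_def regular_derivation_id regular_derivation_comp)

lemma funpow_derivation_antimono:
  assumes "regular_derivation d" and "closed P" and "m \<le> n"
  shows "(d ^^ n) P \<subseteq> (d ^^ m) P"
proof -
  obtain k where "n = k + m"
    using assms(3) le_iff_add by (metis add.commute)
  then have "(d ^^ n) P = (d ^^ k) ((d ^^ m) P)"
    by (simp add: funpow_add)
  also have "\<dots> \<subseteq> (d ^^ m) P"
    using assms(1,2) by (simp add: regular_derivation_closed regular_derivation_funpow
        regular_derivation_subset)
  finally show ?thesis .
qed

text \<open>Each application of \<open>d\<^sub>1\<close> splits a set into a \<open>d\<^sub>2\<close>-part and a \<open>d\<^sub>3\<close>-part; after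
  \<open>n + m - 1\<close> steps every branch has taken \<open>n\<close> steps of \<open>d\<^sub>2\<close> or \<open>m\<close> steps of \<open>d\<^sub>3\<close>.\<close>

lemma funpow_derivation_subset_Un:
  assumes d1: "regular_derivation d\<^sub>1" and d2: "regular_derivation d\<^sub>2"
    and d3: "regular_derivation d\<^sub>3"
    and split: "\<And>Q. closed Q \<Longrightarrow> d\<^sub>1 Q \<subseteq> d\<^sub>2 Q \<union> d\<^sub>3 Q"
  shows "closed P \<Longrightarrow> n + m \<le> Suc k \<Longrightarrow> (d\<^sub>1 ^^ k) P \<subseteq> (d\<^sub>2 ^^ n) P \<union> (d\<^sub>3 ^^ m) P"
proof (induction k arbitrary: P n m)
  case 0
  then show ?case
    by (cases n) auto
next
  case (Suc k)
  show ?case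
  proof (cases "n = 0 \<or> m = 0")
    case True
    moreover have "(d\<^sub>1 ^^ Suc k) P \<subseteq> P"
      using regular_derivation_subset[OF regular_derivation_funpow[OF d1] Suc.prems(1)] .
    ultimately show ?thesis
      by (metis Un_upper1 Un_upper2 funpow_0 order_trans)
  next
    case False
    then obtain n' m' where nm: "n = Suc n'" "m = Suc m'"
      by (metis not0_implies_Suc)
    let ?P2 = "d\<^sub>2 P" and ?P3 = "d\<^sub>3 P"
    have closed: "closed ?P2" "closed ?P3"
      using regular_derivation_closed d2 d3 Suc.prems(1) by blast+
    have "(d\<^sub>1 ^^ Suc k) P = (d\<^sub>1 ^^ k) (d\<^sub>1 P)"
      by (simp add: funpow_Suc_right del: funpow.simps)
    also have "\<dots> \<subseteq> (d\<^sub>1 ^^ k) (?P2 \<union> ?P3)"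
      using regular_derivation_mono[OF regular_derivation_funpow[OF d1]
          regular_derivation_closed[OF d1 Suc.prems(1)] _ split[OF Suc.prems(1)]] closed
      by blast
    also have "\<dots> \<subseteq> (d\<^sub>1 ^^ k) ?P2 \<union> (d\<^sub>1 ^^ k) ?P3"
      using regular_derivation_Un[OF regular_derivation_funpow[OF d1] closed] .
    also have "\<dots> \<subseteq> ((d\<^sub>2 ^^ n') ?P2 \<union> (d\<^sub>3 ^^ m) ?P2) \<union> ((d\<^sub>2 ^^ n) ?P3 \<union> (d\<^sub>3 ^^ m') ?P3)"
      using Suc.IH[OF closed(1), of n' m] Suc.IH[OF closed(2), of n m'] Suc.prems(2) nm by auto
    also have "\<dots> \<subseteq> (d\<^sub>2 ^^ n) P \<union> (d\<^sub>3 ^^ m) P"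
      using regular_derivation_mono[OF regular_derivation_funpow[OF d3] closed(1) Suc.prems(1)
          regular_derivation_subset[OF d2 Suc.prems(1)], of m]
        regular_derivation_mono[OF regular_derivation_funpow[OF d2] closed(2) Suc.prems(1)
          regular_derivation_subset[OF d3 Suc.prems(1)], of n]
      unfolding nm by (auto simp: funpow_Suc_right simp del: funpow.simps)
    finally show ?thesis .
  qed
qed

lemma INT_funpow_derivation_subset_Un:
  assumes d1: "regular_derivation d\<^sub>1" and d2: "regular_derivation d\<^sub>2"
    and d3: "regular_derivation d\<^sub>3"
    and split: "\<And>Q. closed Q \<Longrightarrow> d\<^sub>1 Q \<subseteq> d\<^sub>2 Q \<union> d\<^sub>3 Q" and P: "closed P"
  shows "(\<Inter>n. (d\<^sub>1 ^^ n) P) \<subseteq> (\<Inter>n. (d\<^sub>2 ^^ n) P) \<union> (\<Inter>n. (d\<^sub>3 ^^ n) P)"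
proof -
  have "(\<Inter>n. (d\<^sub>1 ^^ n) P) \<subseteq> (\<Inter>n. (d\<^sub>2 ^^ n) P \<union> (d\<^sub>3 ^^ n) P)"
    using funpow_derivation_subset_Un[OF d1 d2 d3 split P, of n n "n + n" for n] by fastforce
  also have "\<dots> \<subseteq> (\<Inter>n. (d\<^sub>2 ^^ n) P) \<union> (\<Inter>n. (d\<^sub>3 ^^ n) P)"
    by (rule INT_Un_subset_of_chain)
      (meson nle_le funpow_derivation_antimono[OF d2 P] funpow_derivation_antimono[OF d3 P])
  finally show ?thesis .
qed

section \<open>Transfinite iterates along a well-order\<close>

lemma strict_below_eq_underS: "strict_below r = underS r"
  unfolding strict_below_def underS_def by blast

context wo_rel
begin

lemma is_max_unique: "is_max r S y \<Longrightarrow> is_max r S y' \<Longrightarrow> y = y'"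
  using ANTISYM unfolding is_max_def antisym_def by blast

lemma deriv_iter_at_unfold:
  "deriv_iter_at d r P x =
    (if underS x = {} then P
     else if \<exists>y. is_max r (underS x) y
       then d (deriv_iter_at d r P (THE y. is_max r (underS x) y))
     else \<Inter> (deriv_iter_at d r P ` underS x))"
proof -
  define H where "H = (\<lambda>F x.
     if underS x = {} then P
     else if \<exists>y. is_max r (underS x) y then d (F (THE y. is_max r (underS x) y))
     else \<Inter> (F ` underS x))"
  have "adm_wo H"
    unfolding adm_wo_def
  proof (intro allI impI)
    fix f g :: "'a \<Rightarrow> 'b set" and x
    assume agree: "\<forall>y\<in>underS x. f y = g y"
    show "H f x = H g x"
    proof (cases "\<exists>y. is_max r (underS x) y")
      case True
      then obtain y where y: "is_max r (underS x) y" by blast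
      then have "(THE y. is_max r (underS x) y) = y"
        using is_max_unique by blast
      moreover have "y \<in> underS x"
        using y by (simp add: is_max_def)
      ultimately show ?thesis
        using True agree unfolding H_def by simp
    next
      case False
      then have "(\<exists>y. is_max r (underS x) y) = False"
        by blast
      moreover have "f ` underS x = g ` underS x"
        using agree by (simp cong: image_cong)
      ultimately show ?thesis
        unfolding H_def by (simp only: if_False)
    qed
  qed
  then have "worec H = H (worec H)"
    by (rule worec_fixpoint)
  moreover have "deriv_iter_at d r P = worec H"
    unfolding deriv_iter_at_def worec_def H_def strict_below_eq_underS ..
  ultimately have "deriv_iter_at d r P x = H (deriv_iter_at d r P) x"
    by metis
  then show ?thesis
    by (simp only: H_def)
qed

lemma deriv_iter_at_bot: "underS x = {} \<Longrightarrow> deriv_iter_at d r P x = P"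
  by (subst deriv_iter_at_unfold) simp

lemma deriv_iter_at_succ:
  assumes "is_max r (underS x) y"
  shows "deriv_iter_at d r P x = d (deriv_iter_at d r P y)"
proof -
  have "(THE y. is_max r (underS x) y) = y"
    using assms is_max_unique by blast
  moreover have "underS x \<noteq> {}"
    using assms by (auto simp: is_max_def)
  ultimately show ?thesis
    using assms by (subst deriv_iter_at_unfold) auto
qed

lemma deriv_iter_at_limit:
  "underS x \<noteq> {} \<Longrightarrow> \<nexists>y. is_max r (underS x) y \<Longrightarrow>
    deriv_iter_at d r P x = \<Inter> (deriv_iter_at d r P ` underS x)"
  by (subst deriv_iter_at_unfold) auto

lemma underS_induct[case_names less]: "(\<And>x. (\<And>y. y \<in> underS x \<Longrightarrow> Q y) \<Longrightarrow> Q x) \<Longrightarrow> Q a"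
  by (rule well_order_induct) (simp add: underS_def)

lemma transfinite_induct[case_names zero succ limit]:
  assumes zero: "\<And>x. underS x = {} \<Longrightarrow> Q x"
    and succ: "\<And>x y. is_max r (underS x) y \<Longrightarrow> Q y \<Longrightarrow> Q x"
    and limit: "\<And>x. underS x \<noteq> {} \<Longrightarrow> \<nexists>y. is_max r (underS x) y \<Longrightarrow>
      (\<And>y. y \<in> underS x \<Longrightarrow> Q y) \<Longrightarrow> Q x"
  shows "Q x"
proof (induction x rule: underS_induct)
  case (less x)
  show ?case
  proof (cases "\<exists>y. is_max r (underS x) y")
    case True
    then obtain y where "is_max r (underS x) y" ..
    moreover from this have "y \<in> underS x"
      by (simp add: is_max_def)
    ultimately show ?thesis
      using succ less by blast
  next
    case False
    then show ?thesis
      using zero limit less by blast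
  qed
qed

lemma deriv_iter_at_closed_subset:
  assumes "regular_derivation d" and "closed P"
  shows "closed (deriv_iter_at d r P x) \<and> deriv_iter_at d r P x \<subseteq> P"
proof (induction x rule: transfinite_induct)
  case (zero x)
  then show ?case
    using assms(2) by (simp add: deriv_iter_at_bot)
next
  case (succ x y)
  then show ?case
    using regular_derivationD[OF assms(1)] by (fastforce simp: deriv_iter_at_succ)
next
  case (limit x)
  then show ?case
    by (auto simp: deriv_iter_at_limit)
qed

lemma closed_deriv_iter_at: "regular_derivation d \<Longrightarrow> closed P \<Longrightarrow> closed (deriv_iter_at d r P x)"
  and deriv_iter_at_subset: "regular_derivation d \<Longrightarrow> closed P \<Longrightarrow> deriv_iter_at d r P x \<subseteq> P"
  using deriv_iter_at_closed_subset by blast+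

lemma deriv_iter_at_antimono:
  assumes "regular_derivation d" and "closed P" and "(x, y) \<in> r"
  shows "deriv_iter_at d r P y \<subseteq> deriv_iter_at d r P x"
  using assms(3)
proof (induction y arbitrary: x rule: transfinite_induct)
  case (zero y)
  then show ?case
    by (auto simp: underS_def)
next
  case (succ y m)
  show ?case
  proof (cases "x = y")
    case False
    with succ.prems succ.hyps(1) have "(x, m) \<in> r"
      by (simp add: is_max_def underS_def)
    then have "deriv_iter_at d r P m \<subseteq> deriv_iter_at d r P x"
      by (rule succ.IH)
    then show ?thesis
      using regular_derivation_subset[OF assms(1) closed_deriv_iter_at[OF assms(1,2)]]
      by (auto simp: deriv_iter_at_succ[OF succ.hyps(1)])
  qed simp
next
  case (limit y)
  then show ?case
    by (cases "x = y") (auto simp: deriv_iter_at_limit underS_def)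
qed

lemma deriv_iter_at_mono:
  assumes "regular_derivation d" and "closed P" and "closed Q" and "P \<subseteq> Q"
  shows "deriv_iter_at d r P x \<subseteq> deriv_iter_at d r Q x"
proof (induction x rule: transfinite_induct)
  case (succ x y)
  then show ?case
    using regular_derivation_mono[OF assms(1) closed_deriv_iter_at[OF assms(1,2)]
        closed_deriv_iter_at[OF assms(1,3)]]
    by (simp add: deriv_iter_at_succ)
next
  case (limit x)
  then show ?case
    by (simp add: deriv_iter_at_limit) (blast dest: limit.IH)
qed (use assms(4) in \<open>simp add: deriv_iter_at_bot\<close>)

lemma INT_deriv_iter_at_Un_subset:
  assumes "regular_derivation d\<^sub>1" "regular_derivation d\<^sub>2" "closed P\<^sub>1" "closed P\<^sub>2"
    and "S \<subseteq> Field r"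
  shows "(\<Inter>s\<in>S. deriv_iter_at d\<^sub>1 r P\<^sub>1 s \<union> deriv_iter_at d\<^sub>2 r P\<^sub>2 s)
    \<subseteq> (\<Inter>s\<in>S. deriv_iter_at d\<^sub>1 r P\<^sub>1 s) \<union> (\<Inter>s\<in>S. deriv_iter_at d\<^sub>2 r P\<^sub>2 s)"
proof (rule INT_Un_subset_of_chain)
  fix s t assume "s \<in> S" "t \<in> S"
  with assms(5) have "(s, t) \<in> r \<or> (t, s) \<in> r"
    using TOTALS by blast
  then show "deriv_iter_at d\<^sub>1 r P\<^sub>1 s \<subseteq> deriv_iter_at d\<^sub>1 r P\<^sub>1 t \<and>
      deriv_iter_at d\<^sub>2 r P\<^sub>2 s \<subseteq> deriv_iter_at d\<^sub>2 r P\<^sub>2 t \<or>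
    deriv_iter_at d\<^sub>1 r P\<^sub>1 t \<subseteq> deriv_iter_at d\<^sub>1 r P\<^sub>1 s \<and>
      deriv_iter_at d\<^sub>2 r P\<^sub>2 t \<subseteq> deriv_iter_at d\<^sub>2 r P\<^sub>2 s"
    using deriv_iter_at_antimono[OF assms(1,3)] deriv_iter_at_antimono[OF assms(2,4)] by blast
qed

lemma deriv_iter_at_Un:
  assumes "regular_derivation d" and "closed P" and "closed Q"
  shows "deriv_iter_at d r (P \<union> Q) x \<subseteq> deriv_iter_at d r P x \<union> deriv_iter_at d r Q x"
proof (induction x rule: transfinite_induct)
  case (zero x)
  then show ?case
    by (simp add: deriv_iter_at_bot)
next
  case (succ x y)
  have closed: "closed (deriv_iter_at d r P y)" "closed (deriv_iter_at d r Q y)"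
    "closed (deriv_iter_at d r (P \<union> Q) y)"
    using closed_deriv_iter_at[OF assms(1)] assms(2,3) by blast+
  have "d (deriv_iter_at d r (P \<union> Q) y) \<subseteq> d (deriv_iter_at d r P y \<union> deriv_iter_at d r Q y)"
    using regular_derivation_mono[OF assms(1) closed(3) _ succ.IH] closed(1,2) by blast
  also have "\<dots> \<subseteq> d (deriv_iter_at d r P y) \<union> d (deriv_iter_at d r Q y)"
    using regular_derivation_Un[OF assms(1) closed(1,2)] .
  finally show ?case
    by (simp add: deriv_iter_at_succ[OF succ.hyps(1)])
next
  case (limit x)
  then have "deriv_iter_at d r (P \<union> Q) x
      \<subseteq> (\<Inter>s\<in>underS x. deriv_iter_at d r P s \<union> deriv_iter_at d r Q s)"
    by (auto simp: deriv_iter_at_limit)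
  also have "\<dots> \<subseteq> deriv_iter_at d r P x \<union> deriv_iter_at d r Q x"
    using INT_deriv_iter_at_Un_subset[OF assms(1,1,2,3) Order_Relation.underS_Field] limit.hyps
    by (simp add: deriv_iter_at_limit)
  finally show ?case .
qed

lemma regular_derivation_deriv_iter_at:
  "regular_derivation d \<Longrightarrow> regular_derivation (\<lambda>P. deriv_iter_at d r P x)"
  unfolding regular_derivation_def[of "\<lambda>P. deriv_iter_at d r P x"] derivation_def
  by (simp add: closed_deriv_iter_at deriv_iter_at_subset deriv_iter_at_mono deriv_iter_at_Un)

end

section \<open>The well-order of exponents and iterates along it\<close>

definition fin_supp_on :: "'a set \<Rightarrow> ('a \<Rightarrow> nat) set" where
  "fin_supp_on S = {f. finite {x. f x \<noteq> 0} \<and> {x. f x \<noteq> 0} \<subseteq> S}"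

lemma fin_supp_eq_fin_supp_on: "fin_supp r = fin_supp_on (Field r)"
  unfolding fin_supp_def fin_supp_on_def by blast

lemma zero_in_fin_supp_on [simp]: "0 \<in> fin_supp_on S"
  by (simp add: fin_supp_on_def)

lemma add_in_fin_supp_on:
  assumes "f \<in> fin_supp_on S" and "g \<in> fin_supp_on S"
  shows "f + g \<in> fin_supp_on S"
proof -
  have "{x. (f + g) x \<noteq> 0} = {x. f x \<noteq> 0} \<union> {x. g x \<noteq> 0}"
    by auto
  with assms show ?thesis
    by (simp add: fin_supp_on_def)
qed

lemma fin_supp_on_mono: "S \<subseteq> T \<Longrightarrow> fin_supp_on S \<subseteq> fin_supp_on T"
  by (auto simp: fin_supp_on_def)

lemma fin_supp_on_empty: "fin_supp_on {} = {0}"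
  by (auto simp: fin_supp_on_def fun_eq_iff)

context wo_rel
begin

lemma aboveS_subset_aboveS: "(x, y) \<in> r \<Longrightarrow> aboveS y \<subseteq> aboveS x"
  using TRANS ANTISYM unfolding aboveS_def trans_def antisym_def by blast

lemma finite_has_max:
  assumes "finite S" and "S \<noteq> {}" and "S \<subseteq> Field r"
  shows "\<exists>m. is_max r S m"
  using assms
proof (induction S rule: finite_ne_induct)
  case (singleton x)
  then show ?case
    using REFL by (auto simp: is_max_def refl_on_def)
next
  case (insert x S)
  then obtain m where m: "is_max r S m"
    by blast
  then have "x \<in> Field r" "m \<in> Field r"
    using insert.prems by (auto simp: is_max_def)
  then consider "(x, m) \<in> r" | "(m, x) \<in> r"
    using TOTALS by blast
  then show ?case
  proof cases
    case 1
    with m have "is_max r (insert x S) m"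
      by (simp add: is_max_def)
    then show ?thesis ..
  next
    case 2
    with m \<open>x \<in> Field r\<close> have "is_max r (insert x S) x"
      using REFL TRANS unfolding is_max_def refl_on_def trans_def by blast
    then show ?thesis ..
  qed
qed

definition omega_less :: "('a \<Rightarrow> nat) \<Rightarrow> ('a \<Rightarrow> nat) \<Rightarrow> bool" (infix "<\<^sub>\<omega>" 50) where
  "f <\<^sub>\<omega> g \<longleftrightarrow> f \<in> fin_supp r \<and> g \<in> fin_supp r \<and>
     (\<exists>x\<in>Field r. f x < g x \<and> (\<forall>y\<in>aboveS x. f y = g y))"

lemma omega_exp_iff: "(f, g) \<in> omega_exp r \<longleftrightarrow> f \<in> fin_supp r \<and> g \<in> fin_supp r \<and> (f = g \<or> f <\<^sub>\<omega> g)"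
  unfolding omega_exp_def omega_less_def aboveS_def by (auto intro: FieldI2)

lemma omega_less_fin_supp: "f <\<^sub>\<omega> g \<Longrightarrow> f \<in> fin_supp r \<and> g \<in> fin_supp r"
  by (simp add: omega_less_def)

lemma omega_less_irrefl: "\<not> f <\<^sub>\<omega> f"
  by (simp add: omega_less_def)

lemma omega_less_trans:
  assumes "f <\<^sub>\<omega> g" and "g <\<^sub>\<omega> h"
  shows "f <\<^sub>\<omega> h"
proof -
  obtain x where x: "x \<in> Field r" "f x < g x" "\<forall>y\<in>aboveS x. f y = g y"
    using assms(1) by (auto simp: omega_less_def)
  obtain z where z: "z \<in> Field r" "g z < h z" "\<forall>y\<in>aboveS z. g y = h y"
    using assms(2) by (auto simp: omega_less_def)
  have fin_supp: "f \<in> fin_supp r" "h \<in> fin_supp r"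
    using assms by (simp_all add: omega_less_def)
  consider "(x, z) \<in> r" | "(z, x) \<in> r"
    using TOTALS x(1) z(1) by blast
  then show ?thesis
  proof cases
    case 1
    then have "f z < h z"
      using x z by (cases "x = z") (auto simp: aboveS_def)
    moreover have "\<forall>y\<in>aboveS z. f y = h y"
      using aboveS_subset_aboveS[OF 1] x(3) z(3) by auto
    ultimately show ?thesis
      using fin_supp z(1) by (auto simp: omega_less_def)
  next
    case 2
    then have "f x < h x"
      using x z by (cases "x = z") (auto simp: aboveS_def)
    moreover have "\<forall>y\<in>aboveS x. f y = h y"
      using aboveS_subset_aboveS[OF 2] x(3) z(3) by auto
    ultimately show ?thesis
      using fin_supp x(1) by (auto simp: omega_less_def)
  qed
qed

lemma omega_less_asym: "f <\<^sub>\<omega> g \<Longrightarrow> \<not> g <\<^sub>\<omega> f"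
  using omega_less_trans omega_less_irrefl by blast

lemma omega_less_linear:
  assumes "f \<in> fin_supp r" and "g \<in> fin_supp r" and "f \<noteq> g"
  shows "f <\<^sub>\<omega> g \<or> g <\<^sub>\<omega> f"
proof -
  let ?D = "{x. f x \<noteq> g x}"
  have "?D \<subseteq> {x. f x \<noteq> 0} \<union> {x. g x \<noteq> 0}"
    by auto
  with assms have "finite ?D" "?D \<noteq> {}" "?D \<subseteq> Field r"
    by (auto simp: fin_supp_def fun_eq_iff intro: finite_subset)
  then obtain m where m: "is_max r ?D m"
    using finite_has_max by blast
  then have "m \<in> Field r" "f m \<noteq> g m"
    using \<open>?D \<subseteq> Field r\<close> by (auto simp: is_max_def)
  moreover have "\<forall>y\<in>aboveS m. f y = g y"
    using m ANTISYM unfolding is_max_def aboveS_def antisym_def by blast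
  ultimately show ?thesis
    using assms(1,2) unfolding omega_less_def by (metis linorder_neqE_nat)
qed

text \<open>Well-foundedness: an exponent is encoded as the multiset of its places (counted with
  multiplicity), and \<open><\<^sub>\<omega>\<close> is then contained in the multiset extension of the strict order.\<close>

definition place_mset :: "('a \<Rightarrow> nat) \<Rightarrow> 'a multiset" where
  "place_mset f = Abs_multiset f"

lemma count_place_mset: "finite {x. f x \<noteq> 0} \<Longrightarrow> count (place_mset f) = f"
  unfolding place_mset_def by (rule count_Abs_multiset) simp

lemma omega_less_imp_mult:
  assumes "f <\<^sub>\<omega> g"
  shows "(place_mset f, place_mset g) \<in> mult (r - Id)"
proof -
  obtain x where x: "x \<in> Field r" "f x < g x" "\<forall>y\<in>aboveS x. f y = g y"
    using assms by (auto simp: omega_less_def)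
  have fin: "finite {x. f x \<noteq> 0}" "finite {x. g x \<noteq> 0}" "{x. f x \<noteq> 0} \<subseteq> Field r"
    using assms by (auto simp: omega_less_def fin_supp_def)
  define I where "I = place_mset (\<lambda>y. min (f y) (g y))"
  define K where "K = place_mset (\<lambda>y. f y - g y)"
  define J where "J = place_mset (\<lambda>y. g y - f y)"
  have count: "count I = (\<lambda>y. min (f y) (g y))" "count K = (\<lambda>y. f y - g y)"
    "count J = (\<lambda>y. g y - f y)"
    unfolding I_def K_def J_def
    by (rule count_place_mset; rule finite_subset[OF _ fin(1)] finite_subset[OF _ fin(2)]; auto)+
  have "I + K = place_mset f" "I + J = place_mset g"
    by (simp_all add: multiset_eq_iff count count_place_mset[OF fin(1)]
        count_place_mset[OF fin(2)] min_def)
  moreover have "x \<in># J"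
    using x(2) by (simp add: count flip: count_greater_zero_iff)
  then have "J \<noteq> {#}"
    by auto
  moreover have "\<exists>j\<in>#J. (k, j) \<in> r - Id" if "k \<in># K" for k
  proof -
    have "g k < f k"
      using that by (simp add: count flip: count_greater_zero_iff)
    then have "k \<in> Field r" "k \<notin> aboveS x"
      using fin(3) x(3) by auto
    then have "(k, x) \<in> r" "k \<noteq> x"
      using TOTALS x \<open>g k < f k\<close> by (auto simp: aboveS_def)
    with \<open>x \<in># J\<close> show ?thesis
      by blast
  qed
  ultimately show ?thesis
    using one_step_implies_mult[of J K "r - Id" I] by auto
qed

lemma wf_omega_less: "wf {(f, g). f <\<^sub>\<omega> g}"
proof (rule wf_subset)
  show "wf (inv_image (mult (r - Id)) place_mset)"
    by (rule wf_inv_image[OF wf_mult[OF WF]])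
  show "{(f, g). f <\<^sub>\<omega> g} \<subseteq> inv_image (mult (r - Id)) place_mset"
    using omega_less_imp_mult by auto
qed

lemma omega_less_induct [case_names less]: "(\<And>g. (\<And>h. h <\<^sub>\<omega> g \<Longrightarrow> Q h) \<Longrightarrow> Q g) \<Longrightarrow> Q g"
  using wf_induct_rule[OF wf_omega_less, of Q] by auto

lemma Field_omega_exp: "Field (omega_exp r) = fin_supp r"
  by (auto simp: Field_def omega_exp_iff)

lemma wo_rel_omega_exp: "wo_rel (omega_exp r)"
proof -
  have "omega_exp r - Id = {(f, g). f <\<^sub>\<omega> g}"
    using omega_less_fin_supp omega_less_irrefl by (auto simp: omega_exp_iff)
  then have "wf (omega_exp r - Id)"
    using wf_omega_less by simp
  moreover have "omega_exp r \<subseteq> fin_supp r \<times> fin_supp r"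
    by (auto simp: omega_exp_iff)
  moreover have "refl_on (fin_supp r) (omega_exp r)" "trans (omega_exp r)"
    "antisym (omega_exp r)" "total_on (fin_supp r) (omega_exp r)"
    unfolding refl_on_def trans_def antisym_def total_on_def omega_exp_iff
    using omega_less_trans omega_less_asym omega_less_linear omega_less_fin_supp
    by blast+
  ultimately show ?thesis
    unfolding wo_rel_def well_order_on_def linear_order_on_def partial_order_on_def
      preorder_on_def Field_omega_exp by blast
qed

lemma underS_omega_exp: "Order_Relation.underS (omega_exp r) g = {f. f <\<^sub>\<omega> g}"
  using omega_less_fin_supp omega_less_irrefl by (auto simp: underS_def omega_exp_iff)

lemma fin_supp_on_subset_fin_supp: "S \<subseteq> Field r \<Longrightarrow> fin_supp_on S \<subseteq> fin_supp r"
  by (simp add: fin_supp_eq_fin_supp_on fin_supp_on_mono)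

lemma above_subset_Field: "above a \<subseteq> Field r"
  by (auto simp: above_def Field_def)

lemma not_omega_less_zero [simp]: "\<not> h <\<^sub>\<omega> 0"
  by (simp add: omega_less_def)

lemma zero_omega_less: "g \<in> fin_supp r \<Longrightarrow> g \<noteq> 0 \<Longrightarrow> 0 <\<^sub>\<omega> g"
  using omega_less_linear[of 0 g] by (auto simp: fin_supp_eq_fin_supp_on)

lemma omega_less_add_left_iff:
  assumes "f \<in> fin_supp r" and "h \<in> fin_supp r" and "h' \<in> fin_supp r"
  shows "f + h <\<^sub>\<omega> f + h' \<longleftrightarrow> h <\<^sub>\<omega> h'"
  using assms add_in_fin_supp_on[of _ "Field r"] by (simp add: omega_less_def fin_supp_eq_fin_supp_on)

lemma omega_less_add_self:
  assumes "f \<in> fin_supp r" and "h \<in> fin_supp r" and "h \<noteq> 0"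
  shows "f <\<^sub>\<omega> f + h"
  using omega_less_add_left_iff[OF assms(1) _ assms(2), of 0] zero_omega_less[OF assms(2,3)]
  by (simp add: fin_supp_eq_fin_supp_on)

definition omega_pred :: "('a \<Rightarrow> nat) \<Rightarrow> ('a \<Rightarrow> nat) \<Rightarrow> bool" where
  "omega_pred g y \<longleftrightarrow> y <\<^sub>\<omega> g \<and> (\<forall>z. z <\<^sub>\<omega> g \<longrightarrow> z = y \<or> z <\<^sub>\<omega> y)"

lemma is_max_omega_exp_iff: "is_max (omega_exp r) {f. f <\<^sub>\<omega> g} y \<longleftrightarrow> omega_pred g y"
  using omega_less_fin_supp by (auto simp: is_max_def omega_pred_def omega_exp_iff)

abbreviation omega_iter :: "('x set \<Rightarrow> 'x set) \<Rightarrow> 'x set \<Rightarrow> ('a \<Rightarrow> nat) \<Rightarrow> 'x set" where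
  "omega_iter d P g \<equiv> deriv_iter_at d (omega_exp r) P g"

lemma omega_iter_zero: "omega_iter d P 0 = P"
  by (simp add: wo_rel.deriv_iter_at_bot[OF wo_rel_omega_exp] underS_omega_exp)

lemma omega_iter_succ: "omega_pred g y \<Longrightarrow> omega_iter d P g = d (omega_iter d P y)"
  by (simp add: wo_rel.deriv_iter_at_succ[OF wo_rel_omega_exp] underS_omega_exp
      is_max_omega_exp_iff)

lemma omega_iter_limit:
  "f <\<^sub>\<omega> g \<Longrightarrow> \<nexists>y. omega_pred g y \<Longrightarrow> omega_iter d P g = \<Inter> (omega_iter d P ` {f. f <\<^sub>\<omega> g})"
  by (subst wo_rel.deriv_iter_at_limit[OF wo_rel_omega_exp])
    (auto simp: underS_omega_exp is_max_omega_exp_iff)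

lemma omega_iter_antimono:
  "regular_derivation d \<Longrightarrow> closed P \<Longrightarrow> f <\<^sub>\<omega> g \<Longrightarrow> omega_iter d P g \<subseteq> omega_iter d P f"
  by (rule wo_rel.deriv_iter_at_antimono[OF wo_rel_omega_exp])
    (simp_all add: omega_exp_iff omega_less_fin_supp)

lemma INT_omega_iter_cofinal:
  assumes "regular_derivation d" and "closed P" and "T \<subseteq> S"
    and "\<And>s. s \<in> S \<Longrightarrow> \<exists>t\<in>T. s = t \<or> s <\<^sub>\<omega> t"
  shows "(\<Inter>s\<in>S. omega_iter d P s) = (\<Inter>t\<in>T. omega_iter d P t)"
  using assms(3,4) omega_iter_antimono[OF assms(1,2)] by blast

end

section \<open>Ordinal addition of exponents\<close>

context wo_rel
begin

lemma omega_le_add: "f \<in> fin_supp r \<Longrightarrow> h \<in> fin_supp r \<Longrightarrow> f + h = f \<or> f <\<^sub>\<omega> f + h"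
  by (cases "h = 0") (auto simp: omega_less_add_self)

lemma omega_less_fin_supp_on_under:
  assumes "h <\<^sub>\<omega> g" and "g \<in> fin_supp_on (under a)" and "a \<in> Field r"
  shows "h \<in> fin_supp_on (under a)"
proof -
  obtain x where x: "x \<in> Field r" "h x < g x" "\<forall>y\<in>aboveS x. h y = g y"
    using assms(1) by (auto simp: omega_less_def)
  have "g x \<noteq> 0"
    using x(2) by simp
  then have xa: "(x, a) \<in> r"
    using assms(2) unfolding fin_supp_on_def under_def by blast
  have "(z, a) \<in> r" if "h z \<noteq> 0" for z
  proof (rule ccontr)
    assume za: "(z, a) \<notin> r"
    have "z \<in> Field r"
      using that assms(1) by (auto simp: omega_less_def fin_supp_def)
    then have "(a, z) \<in> r"
      using TOTALS assms(3) za by blast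
    with xa za have "z \<in> aboveS x"
      using TRANS by (auto simp: aboveS_def trans_def)
    with x(3) that have "g z \<noteq> 0"
      by simp
    with assms(2) za show False
      by (auto simp: fin_supp_on_def under_def)
  qed
  with assms(1) show ?thesis
    by (auto simp: fin_supp_on_def under_def omega_less_def fin_supp_def)
qed

text \<open>With \<open>f\<close> supported above \<open>a\<close> and \<open>g\<close> below \<open>a\<close>, the pointwise sum \<open>f + g\<close> is the
  ordinal sum of the exponents.\<close>

lemma omega_less_add_imp_le:
  assumes a: "a \<in> Field r" and f: "f \<in> fin_supp_on (above a)" and g: "g \<in> fin_supp_on (under a)"
    and "f <\<^sub>\<omega> k" and "k <\<^sub>\<omega> f + g"
  shows "f x \<le> k x"
proof -
  obtain w where w: "w \<in> Field r" "f w < k w" "\<forall>y\<in>aboveS w. f y = k y"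
    using assms(4) by (auto simp: omega_less_def)
  obtain v where v: "v \<in> Field r" "k v < f v + g v" "\<forall>y\<in>aboveS v. k y = f y + g y"
    using assms(5) by (auto simp: omega_less_def)
  have g_zero: "g y = 0" if "(y, a) \<notin> r" for y
    using g that by (auto simp: fin_supp_on_def under_def)
  have wa: "(w, a) \<in> r"
  proof (rule ccontr)
    assume wa: "(w, a) \<notin> r"
    consider "v = w" | "w \<in> aboveS v" | "v \<in> aboveS w"
      using TOTALS v(1) w(1) by (auto simp: aboveS_def)
    then show False
    proof cases
      case 3
      then have "(v, a) \<notin> r"
        using wa TRANS by (auto simp: aboveS_def trans_def)
      then show False
        using 3 v(2) w(3) g_zero by auto
    qed (use v w g_zero wa in auto)
  qed
  show ?thesis
  proof (cases "f x = 0")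
    case False
    then have ax: "(a, x) \<in> r" and "x \<in> Field r"
      using f by (auto simp: fin_supp_on_def above_def intro: FieldI2)
    then consider "x = w" | "x \<in> aboveS w" | "w \<in> aboveS x"
      using TOTALS w(1) by (auto simp: aboveS_def)
    then show ?thesis
    proof cases
      case 3
      then have "x = a" "w = a"
        using ax wa TRANS ANTISYM unfolding aboveS_def trans_def antisym_def by blast+
      with 3 show ?thesis
        by (simp add: aboveS_def)
    qed (use w in auto)
  qed simp
qed

lemma omega_less_add_cases:
  assumes a: "a \<in> Field r" and f: "f \<in> fin_supp_on (above a)" and g: "g \<in> fin_supp_on (under a)"
    and k: "k <\<^sub>\<omega> f + g"
  shows "k = f \<or> k <\<^sub>\<omega> f \<or> (\<exists>h. h <\<^sub>\<omega> g \<and> k = f + h)"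
proof -
  have fin_supp: "f \<in> fin_supp r" "g \<in> fin_supp r" "k \<in> fin_supp r"
    using f g k fin_supp_on_subset_fin_supp[OF above_subset_Field]
      fin_supp_on_subset_fin_supp[OF under_Field] omega_less_fin_supp by blast+
  then consider "k = f" | "k <\<^sub>\<omega> f" | "f <\<^sub>\<omega> k"
    using omega_less_linear by blast
  then show ?thesis
  proof cases
    case 3
    then have "k = f + (k - f)"
      using omega_less_add_imp_le[OF a f g 3 k] by (simp add: fun_eq_iff)
    moreover have "k - f \<in> fin_supp r"
      using fin_supp(3) by (auto simp: fin_supp_def elim: finite_subset[rotated])
    ultimately have "k - f <\<^sub>\<omega> g"
      using k omega_less_add_left_iff[OF fin_supp(1) _ fin_supp(2)] by metis
    with \<open>k = f + (k - f)\<close> show ?thesis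
      by blast
  qed simp_all
qed

context
  fixes a f g
  assumes a: "a \<in> Field r" and f: "f \<in> fin_supp_on (above a)" and g: "g \<in> fin_supp_on (under a)"
begin

private lemma fin_supp_summands: "f \<in> fin_supp r" "g \<in> fin_supp r"
  using f g fin_supp_on_subset_fin_supp[OF above_subset_Field]
    fin_supp_on_subset_fin_supp[OF under_Field] by blast+

lemma omega_pred_add: "omega_pred g y \<Longrightarrow> omega_pred (f + g) (f + y)"
  unfolding omega_pred_def
proof (intro conjI allI impI; elim conjE)
  assume y: "y <\<^sub>\<omega> g" and below_y: "\<forall>z. z <\<^sub>\<omega> g \<longrightarrow> z = y \<or> z <\<^sub>\<omega> y"
  have y_fin_supp: "y \<in> fin_supp r"
    using y omega_less_fin_supp by blast
  show "f + y <\<^sub>\<omega> f + g"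
    using y omega_less_add_left_iff[OF fin_supp_summands(1) y_fin_supp fin_supp_summands(2)] by simp
  fix z assume "z <\<^sub>\<omega> f + g"
  then consider "z = f" | "z <\<^sub>\<omega> f" | h where "h <\<^sub>\<omega> g" "z = f + h"
    using omega_less_add_cases[OF a f g] by blast
  then show "z = f + y \<or> z <\<^sub>\<omega> f + y"
  proof cases
    case 3
    then show ?thesis
      using below_y omega_less_add_left_iff[OF fin_supp_summands(1) _ y_fin_supp] omega_less_fin_supp
      by blast
  qed (use omega_le_add[OF fin_supp_summands(1) y_fin_supp] omega_less_trans in metis)+
qed

lemma omega_pred_add_imp_omega_pred:
  assumes "omega_pred (f + g) m" and "g \<noteq> 0"
  shows "\<exists>y. omega_pred g y"
proof -
  have "m <\<^sub>\<omega> f + g"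
    using assms(1) by (simp add: omega_pred_def)
  then consider "m = f" | "m <\<^sub>\<omega> f" | h where "h <\<^sub>\<omega> g" "m = f + h"
    using omega_less_add_cases[OF a f g] by blast
  then obtain h where h: "h <\<^sub>\<omega> g" "m = f + h"
  proof cases
    case 1
    then show ?thesis
      using that[of 0] zero_omega_less[OF fin_supp_summands(2) assms(2)] by simp
  next
    case 2
    moreover have "f <\<^sub>\<omega> f + g"
      using omega_less_add_self fin_supp_summands assms(2) by blast
    ultimately show ?thesis
      using assms(1) omega_less_asym omega_less_irrefl unfolding omega_pred_def by blast
  qed
  have "omega_pred g h"
    unfolding omega_pred_def
  proof (intro conjI allI impI)
    fix z assume "z <\<^sub>\<omega> g"
    then have "f + z <\<^sub>\<omega> f + g" "z \<in> fin_supp r"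
      using omega_less_add_left_iff[OF fin_supp_summands(1) _ fin_supp_summands(2)] omega_less_fin_supp
      by blast+
    then have "z = h \<or> f + z <\<^sub>\<omega> f + h"
      using assms(1) h(2) unfolding omega_pred_def by (metis add_left_imp_eq)
    then show "z = h \<or> z <\<^sub>\<omega> h"
      using omega_less_add_left_iff[OF fin_supp_summands(1) \<open>z \<in> fin_supp r\<close>] h(1)
        omega_less_fin_supp by blast
  qed (rule h(1))
  then show ?thesis
    by blast
qed

lemma INT_omega_iter_below_add:
  assumes "regular_derivation d" and "closed P" and "0 <\<^sub>\<omega> g"
  shows "\<Inter> (omega_iter d P ` {k. k <\<^sub>\<omega> f + g}) = \<Inter> (omega_iter d P ` (+) f ` {h. h <\<^sub>\<omega> g})"
proof (rule INT_omega_iter_cofinal[OF assms(1,2)])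
  show "(+) f ` {h. h <\<^sub>\<omega> g} \<subseteq> {k. k <\<^sub>\<omega> f + g}"
    using omega_less_add_left_iff[OF fin_supp_summands(1) _ fin_supp_summands(2)] omega_less_fin_supp
    by blast
  fix k assume "k \<in> {k. k <\<^sub>\<omega> f + g}"
  then consider "k = f" | "k <\<^sub>\<omega> f" | h where "h <\<^sub>\<omega> g" "k = f + h"
    using omega_less_add_cases[OF a f g] by blast
  then show "\<exists>t\<in>(+) f ` {h. h <\<^sub>\<omega> g}. k = t \<or> k <\<^sub>\<omega> t"
    using assms(3) by cases force+
qed

end

lemma omega_iter_add:
  assumes d: "regular_derivation d" and P: "closed P"
    and a: "a \<in> Field r" and f: "f \<in> fin_supp_on (above a)"
  shows "g \<in> fin_supp_on (under a) \<Longrightarrow> omega_iter d P (f + g) = omega_iter d (omega_iter d P f) g"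
proof (induction g rule: omega_less_induct)
  case (less g)
  let ?Q = "omega_iter d P f"
  have fin_supp: "f \<in> fin_supp r" "g \<in> fin_supp r"
    using f less.prems fin_supp_on_subset_fin_supp[OF above_subset_Field]
      fin_supp_on_subset_fin_supp[OF under_Field] by blast+
  have IH: "omega_iter d P (f + h) = omega_iter d ?Q h" if "h <\<^sub>\<omega> g" for h
    using less.IH[OF that] omega_less_fin_supp_on_under[OF that less.prems a] by blast
  consider "g = 0" | y where "omega_pred g y" | "g \<noteq> 0" "\<nexists>y. omega_pred g y"
    by blast
  then show ?case
  proof cases
    case 1
    then show ?thesis
      by (simp only: add.right_neutral omega_iter_zero)
  next
    case (2 y)
    then have "y <\<^sub>\<omega> g"
      by (simp add: omega_pred_def)
    have "omega_iter d P (f + g) = d (omega_iter d P (f + y))"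
      using omega_iter_succ[OF omega_pred_add[OF a f less.prems 2]] .
    also have "\<dots> = d (omega_iter d ?Q y)"
      using IH[OF \<open>y <\<^sub>\<omega> g\<close>] by simp
    also have "\<dots> = omega_iter d ?Q g"
      by (rule omega_iter_succ[OF 2, symmetric])
    finally show ?thesis .
  next
    case 3
    have "f <\<^sub>\<omega> f + g" "0 <\<^sub>\<omega> g"
      using omega_less_add_self zero_omega_less fin_supp 3(1) by blast+
    moreover have "\<nexists>m. omega_pred (f + g) m"
      using omega_pred_add_imp_omega_pred[OF a f less.prems] 3 by blast
    ultimately have "omega_iter d P (f + g) = \<Inter> (omega_iter d P ` {k. k <\<^sub>\<omega> f + g})"
      by (simp add: omega_iter_limit)
    also have "\<dots> = \<Inter> (omega_iter d P ` (+) f ` {h. h <\<^sub>\<omega> g})"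
      using INT_omega_iter_below_add[OF a f less.prems d P \<open>0 <\<^sub>\<omega> g\<close>] .
    also have "\<dots> = \<Inter> (omega_iter d ?Q ` {h. h <\<^sub>\<omega> g})"
      using IH by (simp add: image_image)
    also have "\<dots> = omega_iter d ?Q g"
      by (rule omega_iter_limit[OF \<open>0 <\<^sub>\<omega> g\<close> 3(2), symmetric])
    finally show ?thesis .
  qed
qed

end

section \<open>Iterates at powers of \<open>\<omega>\<close>\<close>

text \<open>\<open>omega_term b n\<close> is the exponent of \<open>\<omega>\<^bsup>b\<^esup> \<cdot> n\<close>.\<close>

definition omega_term :: "'a \<Rightarrow> nat \<Rightarrow> 'a \<Rightarrow> nat" where
  "omega_term b n = (\<lambda>x. if x = b then n else 0)"

lemma omega_term_in_fin_supp_on: "b \<in> S \<Longrightarrow> omega_term b n \<in> fin_supp_on S"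
  by (auto simp: fin_supp_on_def omega_term_def)

lemma omega_term_0: "omega_term b 0 = 0"
  by (simp add: omega_term_def fun_eq_iff)

lemma omega_term_Suc: "omega_term b (Suc n) = omega_term b n + omega_term b 1"
  by (simp add: omega_term_def fun_eq_iff)

context wo_rel
begin

lemma omega_iter_omega_term:
  assumes "regular_derivation d" and "closed P" and "b \<in> Field r"
  shows "omega_iter d P (omega_term b n) = ((\<lambda>Q. omega_iter d Q (omega_term b 1)) ^^ n) P"
proof (induction n)
  case 0
  then show ?case
    by (simp only: funpow_0 omega_term_0 omega_iter_zero)
next
  case (Suc n)
  have "b \<in> above b" "b \<in> under b"
    using REFL assms(3) by (auto simp: above_def under_def refl_on_def)
  then have "omega_iter d P (omega_term b n + omega_term b 1)
      = omega_iter d (omega_iter d P (omega_term b n)) (omega_term b 1)"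
    using omega_iter_add[OF assms omega_term_in_fin_supp_on omega_term_in_fin_supp_on] by blast
  then show ?case
    by (simp only: omega_term_Suc Suc funpow.simps comp_apply)
qed

lemma omega_less_omega_term:
  assumes "b \<in> Field r" and "h \<in> fin_supp_on (under b)" and "h b < n"
  shows "h <\<^sub>\<omega> omega_term b n"
proof -
  have "h y = 0" if "y \<in> aboveS b" for y
  proof (rule ccontr)
    assume "h y \<noteq> 0"
    then have "(y, b) \<in> r"
      using assms(2) by (auto simp: fin_supp_on_def under_def)
    with that show False
      using ANTISYM by (auto simp: aboveS_def dest: antisymD)
  qed
  moreover have "h \<in> fin_supp r" "omega_term b n \<in> fin_supp r"
    using assms(1,2) fin_supp_on_subset_fin_supp[OF under_Field]
    by (auto simp: fin_supp_eq_fin_supp_on omega_term_in_fin_supp_on)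
  ultimately show ?thesis
    using assms(1,3) by (auto simp: omega_less_def omega_term_def aboveS_def)
qed

lemma omega_less_omega_term_1_iff:
  assumes "a \<in> Field r"
  shows "h <\<^sub>\<omega> omega_term a 1 \<longleftrightarrow> h \<in> fin_supp_on (underS a)"
proof
  assume h: "h <\<^sub>\<omega> omega_term a 1"
  then obtain x where x: "x \<in> Field r" "h x < omega_term a 1 x"
    "\<forall>y\<in>aboveS x. h y = omega_term a 1 y"
    by (auto simp: omega_less_def)
  then have "x = a" "h a = 0"
    by (auto simp: omega_term_def split: if_splits)
  have "z \<in> underS a" if "h z \<noteq> 0" for z
  proof -
    have "z \<in> Field r" "z \<noteq> a"
      using that h \<open>h a = 0\<close> by (auto simp: omega_less_def fin_supp_def)
    moreover have "z \<notin> aboveS a"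
      using that x(3) \<open>x = a\<close> by (auto simp: omega_term_def aboveS_def)
    ultimately show ?thesis
      using TOTALS assms unfolding underS_def aboveS_def by blast
  qed
  then show "h \<in> fin_supp_on (underS a)"
    using h by (auto simp: fin_supp_on_def omega_less_def fin_supp_def)
next
  assume h: "h \<in> fin_supp_on (underS a)"
  have "h \<in> fin_supp_on (under a)"
    using fin_supp_on_mono[OF underS_subset_under[of r a]] h by blast
  moreover have "h a = 0"
    using h underS_notIn[of a r] unfolding fin_supp_on_def by blast
  ultimately show "h <\<^sub>\<omega> omega_term a 1"
    using omega_less_omega_term[OF assms] by simp
qed

lemma fin_supp_on_no_greatest:
  assumes "S \<noteq> {}" and "S \<subseteq> Field r" and "m \<in> fin_supp_on S"
  shows "\<exists>m'\<in>fin_supp_on S. m <\<^sub>\<omega> m'"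
proof -
  obtain c where "c \<in> S"
    using assms(1) by blast
  then have "omega_term c 1 \<in> fin_supp_on S"
    by (rule omega_term_in_fin_supp_on)
  moreover have "omega_term c 1 \<noteq> 0"
    by (simp add: omega_term_def fun_eq_iff)
  moreover have "fin_supp_on S \<subseteq> fin_supp r"
    using assms(2) by (rule fin_supp_on_subset_fin_supp)
  ultimately show ?thesis
    using assms(3) omega_less_add_self add_in_fin_supp_on by blast
qed

lemma omega_iter_omega_term_1_bot:
  assumes "a \<in> Field r" and "underS a = {}"
  shows "omega_iter d P (omega_term a 1) = d P"
proof -
  have "omega_pred (omega_term a 1) 0"
    unfolding omega_pred_def omega_less_omega_term_1_iff[OF assms(1)] assms(2) fin_supp_on_empty
    by simp
  then show ?thesis
    by (simp only: omega_iter_succ omega_iter_zero)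
qed

lemma omega_iter_omega_term_1_limit:
  assumes "a \<in> Field r" and "underS a \<noteq> {}"
  shows "omega_iter d P (omega_term a 1) = \<Inter> (omega_iter d P ` fin_supp_on (underS a))"
proof -
  have below: "{h. h <\<^sub>\<omega> omega_term a 1} = fin_supp_on (underS a)"
    using omega_less_omega_term_1_iff[OF assms(1)] by blast
  have "\<nexists>y. omega_pred (omega_term a 1) y"
  proof
    assume "\<exists>y. omega_pred (omega_term a 1) y"
    then obtain y where y: "omega_pred (omega_term a 1) y" ..
    then have "y \<in> fin_supp_on (underS a)"
      using below by (auto simp: omega_pred_def)
    then obtain y' where "y' \<in> fin_supp_on (underS a)" "y <\<^sub>\<omega> y'"
      using fin_supp_on_no_greatest[OF assms(2) Order_Relation.underS_Field] by blast
    with y below show False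
      unfolding omega_pred_def using omega_less_asym by blast
  qed
  moreover have "0 <\<^sub>\<omega> omega_term a 1"
    unfolding omega_less_omega_term_1_iff[OF assms(1)] by (rule zero_in_fin_supp_on)
  ultimately show ?thesis
    unfolding below[symmetric] by (rule omega_iter_limit[rotated])
qed

lemma deriv_iter_omega_exp_empty:
  assumes "Field r = {}"
  shows "deriv_iter d (omega_exp r) P = d P"
proof -
  have "Field (omega_exp r) = {0}"
    using assms by (simp add: Field_omega_exp fin_supp_eq_fin_supp_on fin_supp_on_empty)
  moreover have max: "is_max (omega_exp r) {0} 0"
    by (simp add: is_max_def omega_exp_iff fin_supp_eq_fin_supp_on)
  ultimately have "deriv_iter d (omega_exp r) P
      = d (omega_iter d P (THE m. is_max (omega_exp r) {0} m))"
    unfolding deriv_iter_def by auto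
  also have "(THE m. is_max (omega_exp r) {0} m) = 0"
    using max by (auto simp: is_max_def)
  finally show ?thesis
    by (simp only: omega_iter_zero)
qed

lemma deriv_iter_omega_exp_nonempty:
  assumes "Field r \<noteq> {}"
  shows "deriv_iter d (omega_exp r) P = \<Inter> (omega_iter d P ` fin_supp_on (Field r))"
proof -
  have Field: "Field (omega_exp r) = fin_supp_on (Field r)"
    by (simp add: Field_omega_exp fin_supp_eq_fin_supp_on)
  have "\<nexists>m. is_max (omega_exp r) (fin_supp_on (Field r)) m"
  proof
    assume "\<exists>m. is_max (omega_exp r) (fin_supp_on (Field r)) m"
    then obtain m where "m \<in> fin_supp_on (Field r)" "\<forall>z\<in>fin_supp_on (Field r). (z, m) \<in> omega_exp r"
      by (auto simp: is_max_def)
    moreover obtain m' where "m' \<in> fin_supp_on (Field r)" "m <\<^sub>\<omega> m'"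
      using fin_supp_on_no_greatest[OF assms subset_refl] calculation(1) by blast
    ultimately have "m' = m \<or> m' <\<^sub>\<omega> m" "m <\<^sub>\<omega> m'"
      by (auto simp: omega_exp_iff)
    then show False
      using omega_less_asym omega_less_irrefl by blast
  qed
  moreover have "fin_supp_on (Field r) \<noteq> {}"
    using zero_in_fin_supp_on by blast
  ultimately show ?thesis
    unfolding deriv_iter_def Field by auto
qed

lemma omega_less_omega_term_of_is_max:
  assumes "is_max r S M" and "S \<subseteq> Field r" and "h \<in> fin_supp_on S"
  shows "h <\<^sub>\<omega> omega_term M (Suc (h M))"
proof (rule omega_less_omega_term)
  show "M \<in> Field r"
    using assms(1,2) by (auto simp: is_max_def)
  have "S \<subseteq> under M"
    using assms(1) by (auto simp: is_max_def under_def)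
  then show "h \<in> fin_supp_on (under M)"
    using assms(3) fin_supp_on_mono by blast
qed simp

lemma omega_less_omega_term_of_no_max:
  assumes "S \<subseteq> Field r" and "S \<noteq> {}" and "\<nexists>M. is_max r S M" and "h \<in> fin_supp_on S"
  shows "\<exists>b\<in>S. h <\<^sub>\<omega> omega_term b 1"
proof (cases "h = 0")
  case True
  obtain c where "c \<in> S"
    using assms(2) by blast
  moreover have "0 <\<^sub>\<omega> omega_term c 1"
    using calculation assms(1) by (intro omega_less_omega_term) auto
  ultimately show ?thesis
    using True by blast
next
  case False
  have "finite {x. h x \<noteq> 0}" "{x. h x \<noteq> 0} \<noteq> {}" "{x. h x \<noteq> 0} \<subseteq> Field r"
    using assms(1,4) False by (auto simp: fin_supp_on_def fun_eq_iff)
  then obtain m where m: "is_max r {x. h x \<noteq> 0} m"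
    using finite_has_max by blast
  then have "m \<in> S"
    using assms(4) by (auto simp: is_max_def fin_supp_on_def)
  then obtain z where z: "z \<in> S" "(z, m) \<notin> r"
    using assms(3) unfolding is_max_def by blast
  then have "(m, z) \<in> r"
    using TOTALS assms(1) \<open>m \<in> S\<close> by blast
  then have "h \<in> fin_supp_on (under z)"
    using m assms(4) TRANS by (auto simp: fin_supp_on_def is_max_def under_def trans_def)
  moreover have "h z = 0"
    using m z(2) by (auto simp: is_max_def)
  ultimately have "h <\<^sub>\<omega> omega_term z 1"
    using z(1) assms(1) by (intro omega_less_omega_term) auto
  with z(1) show ?thesis ..
qed

lemma INT_omega_iter_fin_supp_on_is_max:
  assumes "regular_derivation d" and "closed P" and "is_max r S M" and "S \<subseteq> Field r"
  shows "(\<Inter>h\<in>fin_supp_on S. omega_iter d P h) = (\<Inter>n. ((\<lambda>Q. omega_iter d Q (omega_term M 1)) ^^ n) P)"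
proof -
  have M: "M \<in> S" "M \<in> Field r"
    using assms(3,4) by (auto simp: is_max_def)
  have "(\<Inter>h\<in>fin_supp_on S. omega_iter d P h) = (\<Inter>t\<in>range (omega_term M). omega_iter d P t)"
    by (rule INT_omega_iter_cofinal[OF assms(1,2)])
      (use M(1) omega_less_omega_term_of_is_max[OF assms(3,4)] in
        \<open>auto intro: omega_term_in_fin_supp_on\<close>)
  also have "\<dots> = (\<Inter>n. omega_iter d P (omega_term M n))"
    by (simp only: image_image)
  also have "\<dots> = (\<Inter>n. ((\<lambda>Q. omega_iter d Q (omega_term M 1)) ^^ n) P)"
    by (intro INF_cong refl omega_iter_omega_term[OF assms(1,2) M(2)])
  finally show ?thesis .
qed

lemma INT_omega_iter_fin_supp_on_no_max:
  assumes "regular_derivation d" and "closed P"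
    and "S \<subseteq> Field r" and "S \<noteq> {}" and "\<nexists>M. is_max r S M"
  shows "(\<Inter>h\<in>fin_supp_on S. omega_iter d P h) = (\<Inter>b\<in>S. omega_iter d P (omega_term b 1))"
proof -
  have "(\<Inter>h\<in>fin_supp_on S. omega_iter d P h) = (\<Inter>t\<in>(\<lambda>b. omega_term b 1) ` S. omega_iter d P t)"
    by (rule INT_omega_iter_cofinal[OF assms(1,2)])
      (use omega_less_omega_term_of_no_max[OF assms(3-5)] in \<open>auto intro: omega_term_in_fin_supp_on\<close>)
  then show ?thesis
    by (simp only: image_image)
qed

text \<open>The induction step of the main argument: the hypothesis on the blocks \<open>\<omega>\<^bsup>b\<^esup>\<close>, \<open>b \<in> S\<close>,
  lifts to the limit over all exponents supported in \<open>S\<close>. With a largest \<open>M \<in> S\<close> these are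
  cofinally the powers \<open>\<omega>\<^bsup>M\<^esup> \<cdot> n\<close>, handled by iterating the block derivations finitely often;
  otherwise the blocks themselves are cofinal and form a chain.\<close>

lemma INT_omega_iter_fin_supp_on_subset_Un:
  assumes d1: "regular_derivation d\<^sub>1" and d2: "regular_derivation d\<^sub>2"
    and d3: "regular_derivation d\<^sub>3" and P: "closed P" and S: "S \<subseteq> Field r"
    and blocks: "\<And>b Q. b \<in> S \<Longrightarrow> closed Q \<Longrightarrow>
      omega_iter d\<^sub>1 Q (omega_term b 1) \<subseteq> omega_iter d\<^sub>2 Q (omega_term b 1) \<union> omega_iter d\<^sub>3 Q (omega_term b 1)"
  shows "(\<Inter>h\<in>fin_supp_on S. omega_iter d\<^sub>1 P h)
    \<subseteq> (\<Inter>h\<in>fin_supp_on S. omega_iter d\<^sub>2 P h) \<union> (\<Inter>h\<in>fin_supp_on S. omega_iter d\<^sub>3 P h)"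
proof -
  consider "S = {}" | M where "is_max r S M" | "S \<noteq> {}" "\<nexists>M. is_max r S M"
    by blast
  then show ?thesis
  proof cases
    case 1
    then show ?thesis
      by (simp only: fin_supp_on_empty INT_insert INT_empty omega_iter_zero Int_UNIV_right
          Un_absorb subset_refl)
  next
    case (2 M)
    then have "M \<in> S"
      by (simp add: is_max_def)
    show ?thesis
      unfolding INT_omega_iter_fin_supp_on_is_max[OF d1 P 2 S]
        INT_omega_iter_fin_supp_on_is_max[OF d2 P 2 S] INT_omega_iter_fin_supp_on_is_max[OF d3 P 2 S]
      by (rule INT_funpow_derivation_subset_Un[OF
            wo_rel.regular_derivation_deriv_iter_at[OF wo_rel_omega_exp d1]
            wo_rel.regular_derivation_deriv_iter_at[OF wo_rel_omega_exp d2]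
            wo_rel.regular_derivation_deriv_iter_at[OF wo_rel_omega_exp d3] blocks[OF \<open>M \<in> S\<close>] P])
  next
    case 3
    have "(\<lambda>b. omega_term b 1) ` S \<subseteq> Field (omega_exp r)"
      using S by (auto simp: Field_omega_exp fin_supp_eq_fin_supp_on intro: omega_term_in_fin_supp_on)
    from wo_rel.INT_deriv_iter_at_Un_subset[OF wo_rel_omega_exp d2 d3 P P this]
    have chain: "(\<Inter>b\<in>S. omega_iter d\<^sub>2 P (omega_term b 1) \<union> omega_iter d\<^sub>3 P (omega_term b 1))
        \<subseteq> (\<Inter>b\<in>S. omega_iter d\<^sub>2 P (omega_term b 1)) \<union> (\<Inter>b\<in>S. omega_iter d\<^sub>3 P (omega_term b 1))"
      by (simp only: image_image)
    have "(\<Inter>b\<in>S. omega_iter d\<^sub>1 P (omega_term b 1))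
        \<subseteq> (\<Inter>b\<in>S. omega_iter d\<^sub>2 P (omega_term b 1) \<union> omega_iter d\<^sub>3 P (omega_term b 1))"
      by (rule INF_superset_mono[OF order_refl blocks[OF _ P]])
    then show ?thesis
      using chain unfolding INT_omega_iter_fin_supp_on_no_max[OF d1 P S 3]
        INT_omega_iter_fin_supp_on_no_max[OF d2 P S 3] INT_omega_iter_fin_supp_on_no_max[OF d3 P S 3]
      by (rule order_trans)
  qed
qed

lemma omega_iter_omega_term_1_subset_Un:
  assumes d1: "regular_derivation d\<^sub>1" and d2: "regular_derivation d\<^sub>2"
    and d3: "regular_derivation d\<^sub>3"
    and split: "\<And>Q. closed Q \<Longrightarrow> d\<^sub>1 Q \<subseteq> d\<^sub>2 Q \<union> d\<^sub>3 Q"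
  shows "a \<in> Field r \<Longrightarrow> closed P \<Longrightarrow>
    omega_iter d\<^sub>1 P (omega_term a 1) \<subseteq> omega_iter d\<^sub>2 P (omega_term a 1) \<union> omega_iter d\<^sub>3 P (omega_term a 1)"
proof (induction a arbitrary: P rule: underS_induct)
  case (less a)
  show ?case
  proof (cases "underS a = {}")
    case True
    show ?thesis
      unfolding omega_iter_omega_term_1_bot[OF less.prems(1) True] by (rule split[OF less.prems(2)])
  next
    case False
    show ?thesis
      unfolding omega_iter_omega_term_1_limit[OF less.prems(1) False]
      by (rule INT_omega_iter_fin_supp_on_subset_Un[OF d1 d2 d3 less.prems(2)
            Order_Relation.underS_Field less.IH[OF _ BNF_Least_Fixpoint.underS_Field]])
  qed
qed

lemma deriv_iter_omega_exp_subset_Un: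
  assumes d1: "regular_derivation d\<^sub>1" and d2: "regular_derivation d\<^sub>2"
    and d3: "regular_derivation d\<^sub>3"
    and split: "\<And>Q. closed Q \<Longrightarrow> d\<^sub>1 Q \<subseteq> d\<^sub>2 Q \<union> d\<^sub>3 Q" and P: "closed P"
  shows "deriv_iter d\<^sub>1 (omega_exp r) P
    \<subseteq> deriv_iter d\<^sub>2 (omega_exp r) P \<union> deriv_iter d\<^sub>3 (omega_exp r) P"
proof (cases "Field r = {}")
  case True
  then show ?thesis
    using split[OF P] by (simp add: deriv_iter_omega_exp_empty)
next
  case False
  show ?thesis
    unfolding deriv_iter_omega_exp_nonempty[OF False]
    by (rule INT_omega_iter_fin_supp_on_subset_Un[OF d1 d2 d3 P subset_refl
          omega_iter_omega_term_1_subset_Un[OF d1 d2 d3 split]])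
qed

end

theorem proposition4p2:
  fixes \<delta>1 \<delta>2 \<delta>3 :: "'x::polish_space set \<Rightarrow> 'x set"
    and r :: "'i rel"
  assumes "regular_derivation \<delta>1" "regular_derivation \<delta>2" "regular_derivation \<delta>3"
    and "\<forall>P. closed P \<longrightarrow> \<delta>1 P \<subseteq> \<delta>2 P \<union> \<delta>3 P"
    and "Well_order r" "countable (Field r)"
    and "closed P"
  shows "deriv_iter \<delta>1 (omega_exp r) P
           \<subseteq> deriv_iter \<delta>2 (omega_exp r) P \<union> deriv_iter \<delta>3 (omega_exp r) P"
  using wo_rel.deriv_iter_omega_exp_subset_Un[OF _ assms(1-3) _ assms(7)] assms(4,5)
  by (simp add: wo_rel_def)

end
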